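(* Let $h$ be a binary function symbol interpreted as associative and idempotent, and let $a,b$ be distinct free constants. Let $t$ be a term of the form $h(t_1,t_2)$ or $h(t_2,t_1)$, where $t_1\in\{a,b\}$ and $t_2$ is an arbitrary term. Then $t$ is not an $AI$-generalization of $h(a,b)$ and $h(b,a)$, i.e. $t\notin \mathcal{G}_{AI}(h(a,b),h(b,a))$.
   Context: Terms are built from a countable set of variables and a set of function symbols with fixed arities; substitutions map variables to terms, are the identity on all but finitely many variables, and are extended homomorphically to terms (written postfix, $t\sigma$). $AI$ denotes the equational theory generated by $h(x,h(y,z)) = h(h(x,y),z)$ and $h(x,x)=x$ (all other symbols free), and $s\approx_{AI} t$ means $s=t$ holds in every model of these axioms. A term $r$ is an $AI$-generalization of terms $s$ and $t$ if there exist substitutions $\sigma,\tau$ with $r\sigma\approx_{AI} s$ and $r\tau\approx_{AI} t$; $\mathcal{G}_{AI}(s,t)$ is the set of all such $r$. *)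

theory Defs
  imports Main
begin

datatype 'f trm = Var nat | Fun 'f "'f trm list"

fun wf_trm :: "('f \<Rightarrow> nat) \<Rightarrow> 'f trm \<Rightarrow> bool" where
  "wf_trm ar (Var x) = True"
| "wf_trm ar (Fun f ts) = (length ts = ar f \<and> (\<forall>t\<in>set ts. wf_trm ar t))"

fun subst_apply :: "'f trm \<Rightarrow> (nat \<Rightarrow> 'f trm) \<Rightarrow> 'f trm" where
  "subst_apply (Var x) \<sigma> = \<sigma> x"
| "subst_apply (Fun f ts) \<sigma> = Fun f (map (\<lambda>t. subst_apply t \<sigma>) ts)"

definition is_subst :: "('f \<Rightarrow> nat) \<Rightarrow> (nat \<Rightarrow> 'f trm) \<Rightarrow> bool" where
  "is_subst ar \<sigma> \<longleftrightarrow> finite {x. \<sigma> x \<noteq> Var x} \<and> (\<forall>x. wf_trm ar (\<sigma> x))"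

inductive AI_eq :: "'f \<Rightarrow> 'f trm \<Rightarrow> 'f trm \<Rightarrow> bool" for h :: 'f where
  assoc: "AI_eq h (Fun h [x, Fun h [y, z]]) (Fun h [Fun h [x, y], z])"
| idem: "AI_eq h (Fun h [x, x]) x"
| refl: "AI_eq h s s"
| sym: "AI_eq h s t \<Longrightarrow> AI_eq h t s"
| trans: "AI_eq h s t \<Longrightarrow> AI_eq h t u \<Longrightarrow> AI_eq h s u"
| cong: "list_all2 (AI_eq h) ss ts \<Longrightarrow> AI_eq h (Fun f ss) (Fun f ts)"

definition AI_gens :: "('f \<Rightarrow> nat) \<Rightarrow> 'f \<Rightarrow> 'f trm \<Rightarrow> 'f trm \<Rightarrow> 'f trm set" where
  "AI_gens ar h s t = {r. \<exists>\<sigma> \<tau>. is_subst ar \<sigma> \<and> is_subst ar \<tau> \<and>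
       AI_eq h (subst_apply r \<sigma>) s \<and> AI_eq h (subst_apply r \<tau>) t}"

end

theory Submission
  imports Defs
begin

text \<open>View a term as the sequence of its maximal non-h subterms (its leaves). Associativity
  does not change that sequence and idempotency only merges repeated blocks, so the first and the
  last leaf are AI-invariant whenever they are constants. The two sides h(a,b) and h(b,a) differ in
  both their first and their last leaf, whereas every instance of h(c,t2) has first leaf c and every
  instance of h(t2,c) has last leaf c.\<close>

fun fst_leaf :: "'f \<Rightarrow> 'f trm \<Rightarrow> 'f trm" where
  "fst_leaf h (Fun f [x, y]) = (if f = h then fst_leaf h x else Fun f [x, y])"
| "fst_leaf h t = t"

fun lst_leaf :: "'f \<Rightarrow> 'f trm \<Rightarrow> 'f trm" where
  "lst_leaf h (Fun f [x, y]) = (if f = h then lst_leaf h y else Fun f [x, y])"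
| "lst_leaf h t = t"

lemma fst_leaf_Fun:
  "fst_leaf h (Fun f ts) = (if f = h \<and> length ts = 2 then fst_leaf h (hd ts) else Fun f ts)"
  by (cases "(h, Fun f ts)" rule: fst_leaf.cases) (auto simp: numeral_2_eq_2)

lemma lst_leaf_Fun:
  "lst_leaf h (Fun f ts) = (if f = h \<and> length ts = 2 then lst_leaf h (last ts) else Fun f ts)"
  by (cases "(h, Fun f ts)" rule: lst_leaf.cases) (auto simp: numeral_2_eq_2)

lemma list_all2_length2_hd_last:
  assumes "list_all2 P xs ys" and "length xs = 2"
  shows "P (hd xs) (hd ys) \<and> P (last xs) (last ys)"
proof -
  have "length ys = 2" using assms by (simp add: list_all2_lengthD)
  then have "\<exists>x1 x2. xs = [x1, x2]" "\<exists>y1 y2. ys = [y1, y2]"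
    using assms(2) by (auto simp: numeral_2_eq_2 length_Suc_conv)
  then show ?thesis using assms(1) by auto
qed

lemma AI_eq_leaf_const_iff:
  assumes "AI_eq h s t"
  shows "(fst_leaf h s = Fun c [] \<longleftrightarrow> fst_leaf h t = Fun c []) \<and>
         (lst_leaf h s = Fun c [] \<longleftrightarrow> lst_leaf h t = Fun c [])"
  using assms
proof (induction rule: AI_eq.induct)
  case (cong ss ts f)
  have "length ss = length ts" using cong.IH by (rule list_all2_lengthD)
  then show ?case
    using list_all2_length2_hd_last[OF cong.IH]
    unfolding fst_leaf_Fun lst_leaf_Fun by auto
qed auto

theorem lemma2:
  fixes ar :: "'f \<Rightarrow> nat" and h a b :: 'f and t t1 t2 :: "'f trm"
  assumes "ar h = 2" and "ar a = 0" and "ar b = 0" and "a \<noteq> b"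
    and "t1 \<in> {Fun a [], Fun b []}"
    and "wf_trm ar t2"
    and "t = Fun h [t1, t2] \<or> t = Fun h [t2, t1]"
  shows "t \<notin> AI_gens ar h (Fun h [Fun a [], Fun b []]) (Fun h [Fun b [], Fun a []])"
proof
  assume "t \<in> AI_gens ar h (Fun h [Fun a [], Fun b []]) (Fun h [Fun b [], Fun a []])"
  then obtain \<sigma> \<tau> where
    \<sigma>: "AI_eq h (subst_apply t \<sigma>) (Fun h [Fun a [], Fun b []])" and
    \<tau>: "AI_eq h (subst_apply t \<tau>) (Fun h [Fun b [], Fun a []])"
    unfolding AI_gens_def by blast
  obtain c where c: "t1 = Fun c []" using assms(5) by auto
  note leaves = AI_eq_leaf_const_iff[OF \<sigma>, of c] AI_eq_leaf_const_iff[OF \<tau>, of c]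
  from assms(7) have "c = a \<and> c = b"
  proof
    assume "t = Fun h [t1, t2]"
    then show ?thesis using leaves c by auto
  next
    assume "t = Fun h [t2, t1]"
    then show ?thesis using leaves c by auto
  qed
  with assms(4) show False by blast
qed

end
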